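(* Let $G$ be a finite-by-abelian profinite group (i.e. $G$ has a finite normal subgroup $T$ with $G/T$ abelian). Then $G$ is central-by-finite, i.e. the center of $G$ has finite index in $G$. *)

theory Defs
  imports "HOL-Analysis.Analysis" "HOL-Algebra.Algebra"
begin

definition topological_group :: "('a, 'b) monoid_scheme \<Rightarrow> 'a topology \<Rightarrow> bool" where
  "topological_group G T \<longleftrightarrow>
     group G \<and> topspace T = carrier G \<and>
     continuous_map (prod_topology T T) T (\<lambda>(x, y). x \<otimes>\<^bsub>G\<^esub> y) \<and>
     continuous_map T T (\<lambda>x. inv\<^bsub>G\<^esub> x)"

definition totally_disconnected_space :: "'a topology \<Rightarrow> bool" where
  "totally_disconnected_space T \<longleftrightarrow>
     (\<forall>S. connectedin T S \<longrightarrow> S = {} \<or> (\<exists>x. S = {x}))"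

definition profinite_group :: "('a, 'b) monoid_scheme \<Rightarrow> 'a topology \<Rightarrow> bool" where
  "profinite_group G T \<longleftrightarrow>
     topological_group G T \<and> compact_space T \<and> Hausdorff_space T \<and>
     totally_disconnected_space T"

definition group_center :: "('a, 'b) monoid_scheme \<Rightarrow> 'a set" where
  "group_center G = {z \<in> carrier G. \<forall>g \<in> carrier G. z \<otimes>\<^bsub>G\<^esub> g = g \<otimes>\<^bsub>G\<^esub> z}"

end

theory Submission
  imports Defs
begin

text \<open>Since \<open>G/N\<close> is abelian, every commutator lies in the finite group \<open>N\<close>.
The commutator map \<open>G \<times> G \<rightarrow> G\<close> is continuous, so the pairs with a nontrivial
commutator form the preimage of a finite, hence closed, set; projecting this closed set
along the compact factor gives the closed set of non-central elements. Thus the centre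
is an open subgroup, and an open subgroup of a compact group has finite index, its
cosets being a disjoint open cover.\<close>

lemma (in group) subgroup_group_center: "subgroup (group_center G) G"
proof
  show "group_center G \<subseteq> carrier G" "\<one> \<in> group_center G"
    by (auto simp: group_center_def)
next
  fix x y assume "x \<in> group_center G" "y \<in> group_center G"
  then have x: "x \<in> carrier G" and xc: "\<And>g. g \<in> carrier G \<Longrightarrow> x \<otimes> g = g \<otimes> x"
    and y: "y \<in> carrier G" and yc: "\<And>g. g \<in> carrier G \<Longrightarrow> y \<otimes> g = g \<otimes> y"
    by (auto simp: group_center_def)
  have "x \<otimes> y \<otimes> g = g \<otimes> (x \<otimes> y)" if g: "g \<in> carrier G" for g
  proof -
    have "x \<otimes> y \<otimes> g = x \<otimes> (g \<otimes> y)" using x y g yc[OF g] by (simp add: m_assoc)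
    also have "\<dots> = g \<otimes> x \<otimes> y" using x y g xc[OF g] by (simp flip: m_assoc)
    finally show ?thesis using x y g by (simp add: m_assoc)
  qed
  then show "x \<otimes> y \<in> group_center G" using x y by (simp add: group_center_def)
  have "inv x \<otimes> g = g \<otimes> inv x" if g: "g \<in> carrier G" for g
  proof -
    have "inv x \<otimes> g = inv x \<otimes> (g \<otimes> x) \<otimes> inv x" using x g by (simp add: m_assoc)
    also have "\<dots> = inv x \<otimes> (x \<otimes> g) \<otimes> inv x" using xc[OF g] by simp
    also have "\<dots> = g \<otimes> inv x" using x g by (simp flip: m_assoc)
    finally show ?thesis .
  qed
  then show "inv x \<in> group_center G" using x by (simp add: group_center_def)
qed

lemma (in group) commutator_eq_one_iff:
  assumes "x \<in> carrier G" "y \<in> carrier G"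
  shows "x \<otimes> y \<otimes> inv x \<otimes> inv y = \<one> \<longleftrightarrow> x \<otimes> y = y \<otimes> x"
proof -
  have "x \<otimes> y \<otimes> inv x \<otimes> inv y = x \<otimes> y \<otimes> inv (y \<otimes> x)"
    using assms by (simp add: inv_mult_group m_assoc)
  then show ?thesis using assms by (simp add: inv_solve_right')
qed

lemma (in group) finite_derived_set_if_finite_by_abelian:
  assumes "N \<lhd> G" and "finite N" and "comm_group (G Mod N)"
  shows "finite (derived_set G (carrier G))"
proof -
  have "derived_set G (carrier G) \<subseteq> derived G (carrier G)"
    unfolding derived_def by (blast intro: generate.incl)
  also have "\<dots> \<subseteq> N" using derived_minimal[OF assms(1,3)] .
  finally show ?thesis using assms(2) by (rule finite_subset)
qed

lemma continuous_map_group_mult: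
  fixes G (structure)
  assumes "topological_group G T" "continuous_map S T f" "continuous_map S T g"
  shows "continuous_map S T (\<lambda>p. f p \<otimes> g p)"
proof -
  have "continuous_map (prod_topology T T) T (\<lambda>(x, y). x \<otimes> y)"
    using assms(1) by (simp add: topological_group_def)
  from continuous_map_compose[OF continuous_map_pairedI[OF assms(2,3)] this]
  show ?thesis by (simp add: o_def)
qed

lemma continuous_map_group_inv:
  fixes G (structure)
  assumes "topological_group G T" "continuous_map S T f"
  shows "continuous_map S T (\<lambda>p. inv (f p))"
proof -
  have "continuous_map T T (\<lambda>x. inv x)"
    using assms(1) by (simp add: topological_group_def)
  from continuous_map_compose[OF assms(2) this] show ?thesis by (simp add: o_def)
qed

lemma continuous_map_commutator:
  fixes G (structure)
  assumes "topological_group G T"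
  shows "continuous_map (prod_topology T T) T (\<lambda>(x, y). x \<otimes> y \<otimes> inv x \<otimes> inv y)"
  unfolding case_prod_unfold
  by (intro continuous_map_group_mult[OF assms] continuous_map_group_inv[OF assms]
      continuous_map_fst continuous_map_snd)

lemma openin_group_center_if_finite_derived_set:
  fixes G (structure)
  assumes TG: "topological_group G T" and "compact_space T" and "Hausdorff_space T"
    and fin: "finite (derived_set G (carrier G))"
  shows "openin T (group_center G)"
proof -
  interpret group G using TG by (simp add: topological_group_def)
  have top: "topspace T = carrier G" using TG by (simp add: topological_group_def)
  define K where "K = {(x, y) \<in> carrier G \<times> carrier G. x \<otimes> y \<otimes> inv x \<otimes> inv y \<noteq> \<one>}"
  have K_preimage: "K = {p \<in> topspace (prod_topology T T).
      (\<lambda>(x, y). x \<otimes> y \<otimes> inv x \<otimes> inv y) p \<in> derived_set G (carrier G) - {\<one>}}"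
    by (auto simp: K_def top)
  have "closedin T (derived_set G (carrier G) - {\<one>})"
    using Hausdorff_imp_t1_space[OF \<open>Hausdorff_space T\<close>] fin top
    unfolding t1_space_closedin_finite by auto
  then have "closedin (prod_topology T T) K"
    unfolding K_preimage
    by (rule closedin_continuous_map_preimage[OF continuous_map_commutator[OF TG]])
  then have "closedin T (fst ` K)"
    using closed_map_fst[OF \<open>compact_space T\<close>] unfolding closed_map_def by blast
  moreover have "group_center G = topspace T - fst ` K"
    by (auto simp: K_def top group_center_def commutator_eq_one_iff
        Domain_fst[symmetric] Domain_iff)
  ultimately show ?thesis by auto
qed

lemma openin_rcos:
  fixes G (structure)
  assumes TG: "topological_group G T" and H: "subgroup H G" and "openin T H"
    and g: "g \<in> carrier G"
  shows "openin T (H #> g)"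
proof -
  interpret group G using TG by (simp add: topological_group_def)
  have top: "topspace T = carrier G" using TG by (simp add: topological_group_def)
  have "continuous_map T T (\<lambda>x. x \<otimes> inv g)"
    using g top by (intro continuous_map_group_mult[OF TG]) auto
  then have "openin T {x \<in> topspace T. x \<otimes> inv g \<in> H}"
    using openin_continuous_map_preimage \<open>openin T H\<close> by blast
  also have "{x \<in> topspace T. x \<otimes> inv g \<in> H} = H #> g"
    using subgroup.rcos_module[OF H is_group g] subgroup.elemrcos_carrier[OF H is_group g] top
    by auto
  finally show ?thesis .
qed

lemma compact_space_finite_open_partition:
  assumes "compact_space T" and "\<And>U. U \<in> \<U> \<Longrightarrow> openin T U \<and> U \<noteq> {}"
    and "pairwise disjnt \<U>" and "\<Union>\<U> = topspace T"
  shows "finite \<U>"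
proof -
  have "compactin T (topspace T)" using assms(1) by (simp add: compact_space_def)
  moreover have "\<forall>U \<in> \<U>. openin T U" using assms(2) by blast
  ultimately obtain \<F> where "finite \<F>" and \<F>: "\<F> \<subseteq> \<U>" "topspace T \<subseteq> \<Union>\<F>"
    using assms(4) unfolding compactin_def by (metis order_refl)
  have "\<U> \<subseteq> \<F>"
  proof
    fix U assume U: "U \<in> \<U>"
    then obtain x where "x \<in> U" using assms(2) by blast
    then have "x \<in> topspace T" using U assms(4) by blast
    then obtain V where "V \<in> \<F>" "x \<in> V" using \<F>(2) by blast
    then have "U = V"
      using U \<F>(1) assms(3) \<open>x \<in> U\<close> unfolding pairwise_def disjnt_def by blast
    with \<open>V \<in> \<F>\<close> show "U \<in> \<F>" by simp
  qed
  then show ?thesis using \<open>finite \<F>\<close> by (rule finite_subset)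
qed

lemma finite_rcosets_if_openin_subgroup:
  fixes G (structure)
  assumes TG: "topological_group G T" and "compact_space T"
    and H: "subgroup H G" and "openin T H"
  shows "finite (rcosets H)"
proof (rule compact_space_finite_open_partition[OF \<open>compact_space T\<close>])
  interpret group G using TG by (simp add: topological_group_def)
  show "openin T U \<and> U \<noteq> {}" if "U \<in> rcosets H" for U
    using that openin_rcos[OF TG H \<open>openin T H\<close>] rcos_self[OF _ H]
    by (auto simp: RCOSETS_def)
  show "pairwise disjnt (rcosets H)"
    using rcos_disjoint[OF H] by (simp add: pairwise_def disjnt_def)
  show "\<Union>(rcosets H) = topspace T"
    using rcosets_part_G[OF H] TG by (simp add: topological_group_def)
qed

theorem lemma2p7:
  fixes G :: "('a, 'b) monoid_scheme" and T :: "'a topology" and N :: "'a set"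
  assumes "profinite_group G T"
    and "normal N G" and "finite N" and "comm_group (G Mod N)"
  shows "finite (rcosets\<^bsub>G\<^esub> (group_center G))"
proof -
  have TG: "topological_group G T" and "compact_space T" "Hausdorff_space T"
    using assms(1) by (auto simp: profinite_group_def)
  then have "group G" by (simp add: topological_group_def)
  have "finite (derived_set G (carrier G))"
    using group.finite_derived_set_if_finite_by_abelian[OF \<open>group G\<close> assms(2-4)] .
  then have "openin T (group_center G)"
    by (rule openin_group_center_if_finite_derived_set[OF TG \<open>compact_space T\<close>
          \<open>Hausdorff_space T\<close>])
  then show ?thesis
    by (rule finite_rcosets_if_openin_subgroup[OF TG \<open>compact_space T\<close>
          group.subgroup_group_center[OF \<open>group G\<close>]])
qed

end
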